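(* Let $\Gamma$ be a weakly distance-regular digraph, let $q\ge3$, and let $(x_0,x_1,\dots,x_{m-1})$ be a circuit consisting of arcs of type $(1,q-1)$ whose length $m$ is minimal among all circuits of $\Gamma$ consisting of arcs of type $(1,q-1)$. Let $(a,b)=\tilde\partial(x_0,x_2)$ and assume $k_{1,q-1}\ge k_{a,b}$. For each $i$ (indices read modulo $m$) let $Y_i=P_{(1,q-1),(1,q-1)}(x_{i-1},x_{i+1})$. If $p_{(1,q-1),(1,q-1)}^{(2,q-2)}>0$ or $|\Gamma_{1,q-1}^2|=1$, then for all $i$ we have $(x_{i-1},x_{i+1})\in\Gamma_{a,b}$ and \[P_{(a,b),(q-1,1)}(x_{i-2},x_{i-1})=P_{(q-1,1),(a,b)}(x_{i+1},x_{i+2})=Y_i.\] Moreover, if $q>3$ and $\Gamma$ is a Cayley digraph of an additive group, then $Y_i-x_{i-1}=Y_{i+1}-x_i$ for all $i$.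
   Context: Digraphs are finite and simple. $\partial(x,y)$ is the length of a shortest directed path from $x$ to $y$; $\tilde\partial(x,y)=(\partial(x,y),\partial(y,x))$; $\Gamma_{\tilde i}=\{(x,y):\tilde\partial(x,y)=\tilde i\}$, and $\Gamma_{a,b}$ means $\Gamma_{(a,b)}$. A strongly connected digraph $\Gamma$ is weakly distance-regular if $(V\Gamma,\{\Gamma_{\tilde i}\})$ is an association scheme. For pairs $\tilde i,\tilde j$ and vertices $x,y$, $P_{\tilde i,\tilde j}(x,y)=\{z:\tilde\partial(x,z)=\tilde i,\ \tilde\partial(z,y)=\tilde j\}$, and $p_{\tilde i,\tilde j}^{\tilde l}=|P_{\tilde i,\tilde j}(x,y)|$ for any $(x,y)\in\Gamma_{\tilde l}$ (taken to be $0$ if $\tilde l$ is not a two-way distance of $\Gamma$). $k_{a,b}=|\{y:\tilde\partial(x,y)=(a,b)\}|$ is the valency. $\Gamma_{1,q-1}^2$ is the set of relations $\Gamma_{\tilde l}$ with $p_{(1,q-1),(1,q-1)}^{\tilde l}\ne0$. An arc $(u,v)$ is of type $(1,r)$ if $\partial(v,u)=r$. A circuit is a closed directed path with distinct vertices. A Cayley digraph of an additive group $G$ with respect to $S\subseteq G\setminus\{0\}$ has vertex set $G$ and arcs $(x,y)$ with $y-x\in S$; for a set $Y$ and element $x$, $Y-x=\{y-x:y\in Y\}$. *)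

theory Defs
  imports "HOL-Algebra.Group"
begin

definition simple_digraph :: "'a set \<Rightarrow> ('a \<times> 'a) set \<Rightarrow> bool" where
  "simple_digraph V A \<longleftrightarrow> finite V \<and> A \<subseteq> V \<times> V \<and> (\<forall>x. (x, x) \<notin> A)"

definition ddist :: "('a \<times> 'a) set \<Rightarrow> 'a \<Rightarrow> 'a \<Rightarrow> nat" where
  "ddist A x y = (LEAST n. (x, y) \<in> A ^^ n)"

definition tdist :: "('a \<times> 'a) set \<Rightarrow> 'a \<Rightarrow> 'a \<Rightarrow> nat \<times> nat" where
  "tdist A x y = (ddist A x y, ddist A y x)"

definition Pset :: "'a set \<Rightarrow> ('a \<times> 'a) set \<Rightarrow> nat \<times> nat \<Rightarrow> nat \<times> nat \<Rightarrow> 'a \<Rightarrow> 'a \<Rightarrow> 'a set" where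
  "Pset V A i j x y = {z \<in> V. tdist A x z = i \<and> tdist A z y = j}"

definition strongly_connected :: "'a set \<Rightarrow> ('a \<times> 'a) set \<Rightarrow> bool" where
  "strongly_connected V A \<longleftrightarrow> V \<noteq> {} \<and> (\<forall>x\<in>V. \<forall>y\<in>V. (x, y) \<in> A\<^sup>*)"

text \<open>Weakly distance-regular: the two-way distance relations form an association
  scheme. The remaining axioms (diagonal relation, partition, closure under transpose)
  hold automatically, so the content is that the intersection numbers are well defined.\<close>
definition wdrg :: "'a set \<Rightarrow> ('a \<times> 'a) set \<Rightarrow> bool" where
  "wdrg V A \<longleftrightarrow> simple_digraph V A \<and> strongly_connected V A \<and>
     (\<forall>x\<in>V. \<forall>y\<in>V. \<forall>x'\<in>V. \<forall>y'\<in>V. tdist A x y = tdist A x' y' \<longrightarrow>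
        (\<forall>i j. card (Pset V A i j x y) = card (Pset V A i j x' y')))"

text \<open>Intersection number p^l_{i,j}; 0 if l is not a two-way distance.\<close>
definition pnum :: "'a set \<Rightarrow> ('a \<times> 'a) set \<Rightarrow> nat \<times> nat \<Rightarrow> nat \<times> nat \<Rightarrow> nat \<times> nat \<Rightarrow> nat" where
  "pnum V A i j l =
     (if \<exists>x\<in>V. \<exists>y\<in>V. tdist A x y = l
      then (let p = (SOME p. p \<in> V \<times> V \<and> tdist A (fst p) (snd p) = l)
            in card (Pset V A i j (fst p) (snd p)))
      else 0)"

definition kval :: "'a set \<Rightarrow> ('a \<times> 'a) set \<Rightarrow> nat \<times> nat \<Rightarrow> nat" where
  "kval V A ab = card {y \<in> V. tdist A (SOME x. x \<in> V) y = ab}"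

definition type_circuit :: "('a \<times> 'a) set \<Rightarrow> nat \<Rightarrow> 'a list \<Rightarrow> bool" where
  "type_circuit A r xs \<longleftrightarrow> xs \<noteq> [] \<and> distinct xs \<and>
     (\<forall>i < length xs. (xs ! i, xs ! ((i + 1) mod length xs)) \<in> A \<and>
        ddist A (xs ! ((i + 1) mod length xs)) (xs ! i) = r)"

definition cyc :: "'a list \<Rightarrow> int \<Rightarrow> 'a" where
  "cyc xs i = xs ! nat (i mod int (length xs))"

end

theory Submission
  imports Defs
begin

text \<open>
  Call a closed walk all of whose arcs have type \<open>(1, q - 1)\<close> a typed walk, and let \<open>m\<close> be
  the length of a shortest typed circuit. Everything rests on one property: there is a pair \<open>L\<close>
  such that in every typed walk of length \<open>m\<close> any two vertices two steps apart have two-way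
  distance \<open>L\<close>. If \<open>\<Gamma>\<^sup>2\<^sub>1\<^sub>,\<^sub>q\<^sub>-\<^sub>1 = {L}\<close> this is immediate. If \<open>p^{(2,q-2)} > 0\<close>, replacing
  vertices of a closed walk of length \<open>q\<close> one after the other by midpoints of their neighbours
  produces a typed walk of length \<open>q\<close>; so \<open>m = q\<close>, and on a typed walk of length \<open>q\<close> the
  return paths force the distance \<open>(2, q - 2)\<close>.

  Replacing \<open>x\<^sub>i\<close> by any \<open>z \<in> Y\<^sub>i\<close> gives again a typed walk of length \<open>m\<close>, hence
  \<open>Y\<^sub>i \<subseteq> P_{L,(q-1,1)}(x\<^sub>i\<^sub>-\<^sub>2, x\<^sub>i\<^sub>-\<^sub>1)\<close>. Counting gives
  \<open>k_{1,q-1} |P_{L,(q-1,1)}(x\<^sub>i\<^sub>-\<^sub>2, x\<^sub>i\<^sub>-\<^sub>1)| = k_L |Y\<^sub>i|\<close>, so \<open>k_L \<le> k_{1,q-1}\<close> turns the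
  inclusion into an equality; the other equality is the transposed argument.

  In a Cayley digraph of an abelian group, replacing \<open>x\<^sub>i\<^sub>-\<^sub>1\<close> by \<open>x\<^sub>i\<^sub>-\<^sub>2 + x\<^sub>i - x\<^sub>i\<^sub>-\<^sub>1\<close> gives
  another typed walk of length \<open>m\<close>. The first part for both walks, translation invariance and
  the symmetry \<open>Y - a = b - Y\<close> of \<open>Y = P_{(1,q-1),(1,q-1)}(a, b)\<close> yield
  \<open>Y\<^sub>i - x\<^sub>i\<^sub>-\<^sub>1 = Y\<^sub>i\<^sub>+\<^sub>1 - x\<^sub>i\<close>.
\<close>

section \<open>Directed distance\<close>

lemma ddist_le: "(x, y) \<in> A ^^ n \<Longrightarrow> ddist A x y \<le> n"
  unfolding ddist_def by (rule Least_le)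

lemma relpow_ddist: "(x, y) \<in> A\<^sup>* \<Longrightarrow> (x, y) \<in> A ^^ ddist A x y"
  unfolding ddist_def by (metis LeastI_ex rtrancl_power)

lemma ddist_triangle:
  assumes "(x, y) \<in> A\<^sup>*" "(y, z) \<in> A\<^sup>*"
  shows "ddist A x z \<le> ddist A x y + ddist A y z"
  using relpow_ddist[OF assms(1)] relpow_ddist[OF assms(2)]
  by (intro ddist_le) (auto simp: relpow_add)

lemma ddist_self [simp]: "ddist A x x = 0"
  using ddist_le[where x = x and y = x and A = A and n = 0] by simp

lemma ddist_eq_0D: "(x, y) \<in> A\<^sup>* \<Longrightarrow> ddist A x y = 0 \<Longrightarrow> x = y"
  using relpow_ddist[of x y A] by simp

lemma ddist_eq_1D: "(x, y) \<in> A\<^sup>* \<Longrightarrow> ddist A x y = 1 \<Longrightarrow> (x, y) \<in> A"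
  using relpow_ddist[of x y A] by simp

lemma ddist_arc_le: "(x, y) \<in> A \<Longrightarrow> ddist A x y \<le> 1"
  using ddist_le[where x = x and y = y and A = A and n = 1] by simp

lemma tdist_swap_eq_iff: "tdist A y x = l \<longleftrightarrow> tdist A x y = prod.swap l"
  by (cases l) (auto simp: tdist_def)

lemma walk_relpow:
  fixes c :: "int \<Rightarrow> 'a"
  assumes "\<And>t. (c t, c (t + 1)) \<in> A"
  shows "(c s, c (s + int n)) \<in> A ^^ n"
proof -
  have "(c (s + int 0), c (s + int n)) \<in> A ^^ n"
    unfolding relpow_fun_conv
  proof (intro exI conjI allI impI)
    show "(c (s + int i), c (s + int (Suc i))) \<in> A" for i
      using assms[of "s + int i"] by (simp add: ac_simps)
  qed simp_all
  then show ?thesis by simp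
qed

lemma wdrg_rtrancl: "wdrg V A \<Longrightarrow> x \<in> V \<Longrightarrow> y \<in> V \<Longrightarrow> (x, y) \<in> A\<^sup>*"
  unfolding wdrg_def strongly_connected_def by blast

lemma wdrg_arc_in_V: "wdrg V A \<Longrightarrow> (x, y) \<in> A \<Longrightarrow> x \<in> V \<and> y \<in> V"
  unfolding wdrg_def simple_digraph_def by blast

lemma wdrg_finite: "wdrg V A \<Longrightarrow> finite V"
  unfolding wdrg_def simple_digraph_def by blast

definition arc_of_type :: "('a \<times> 'a) set \<Rightarrow> nat \<Rightarrow> 'a \<Rightarrow> 'a \<Rightarrow> bool" where
  "arc_of_type A r u v \<longleftrightarrow> (u, v) \<in> A \<and> ddist A v u = r"

lemma arc_of_type_iff_tdist:
  assumes wdrg: "wdrg V A" and r: "1 \<le> r"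
  shows "arc_of_type A r u v \<longleftrightarrow> u \<in> V \<and> v \<in> V \<and> tdist A u v = (1, r)"
proof
  assume "arc_of_type A r u v"
  then have arc: "(u, v) \<in> A" and ret: "ddist A v u = r" by (auto simp: arc_of_type_def)
  have V: "u \<in> V" "v \<in> V" using wdrg_arc_in_V[OF wdrg arc] by auto
  have "u \<noteq> v" using ret r by auto
  then have "ddist A u v \<noteq> 0" using ddist_eq_0D[OF wdrg_rtrancl[OF wdrg V]] by auto
  then have "ddist A u v = 1" using ddist_arc_le[OF arc] by simp
  then show "u \<in> V \<and> v \<in> V \<and> tdist A u v = (1, r)" using V ret by (simp add: tdist_def)
next
  assume "u \<in> V \<and> v \<in> V \<and> tdist A u v = (1, r)"
  then show "arc_of_type A r u v"
    using ddist_eq_1D[OF wdrg_rtrancl[OF wdrg]] by (auto simp: arc_of_type_def tdist_def)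
qed

section \<open>Intersection numbers and valencies\<close>

lemma Pset_transpose: "Pset V A i j x y = Pset V A (prod.swap j) (prod.swap i) y x"
  unfolding Pset_def by (auto simp: tdist_def prod_eq_iff)

lemma finite_Pset: "wdrg V A \<Longrightarrow> finite (Pset V A i j x y)"
  unfolding Pset_def by (auto dest: wdrg_finite)

lemma Pset_mid_iff:
  assumes "wdrg V A" "1 \<le> r" "x \<in> V" "y \<in> V"
  shows "z \<in> Pset V A (1, r) (1, r) x y \<longleftrightarrow> arc_of_type A r x z \<and> arc_of_type A r z y"
  using arc_of_type_iff_tdist[OF assms(1,2)] assms(3,4) by (auto simp: Pset_def)

lemma wdrg_card_Pset_eq:
  assumes "wdrg V A" "x \<in> V" "y \<in> V" "x' \<in> V" "y' \<in> V" "tdist A x y = tdist A x' y'"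
  shows "card (Pset V A i j x y) = card (Pset V A i j x' y')"
  using assms unfolding wdrg_def by blast

lemma pnum_eq_card_Pset:
  assumes wdrg: "wdrg V A" and "x \<in> V" "y \<in> V"
  shows "pnum V A i j (tdist A x y) = card (Pset V A i j x y)"
proof -
  let ?p = "SOME p. p \<in> V \<times> V \<and> tdist A (fst p) (snd p) = tdist A x y"
  have "\<exists>p. p \<in> V \<times> V \<and> tdist A (fst p) (snd p) = tdist A x y"
    using assms by (intro exI[of _ "(x, y)"]) auto
  then have p: "?p \<in> V \<times> V \<and> tdist A (fst ?p) (snd ?p) = tdist A x y"
    by (rule someI_ex)
  have "pnum V A i j (tdist A x y) = card (Pset V A i j (fst ?p) (snd ?p))"
    unfolding pnum_def using assms by (auto simp: Let_def)
  also have "\<dots> = card (Pset V A i j x y)"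
    using p assms by (intro wdrg_card_Pset_eq) auto
  finally show ?thesis .
qed

lemma card_tdist_eq_kval:
  assumes wdrg: "wdrg V A" and x: "x \<in> V"
  shows "card {y \<in> V. tdist A x y = l} = kval V A l"
proof -
  have loops: "{y \<in> V. tdist A u y = l} = Pset V A l (prod.swap l) u u" for u
    unfolding Pset_def by (auto simp: tdist_def prod_eq_iff)
  let ?x\<^sub>0 = "SOME x. x \<in> V"
  have "?x\<^sub>0 \<in> V" using x by (rule someI)
  then have "card (Pset V A l (prod.swap l) x x) = card (Pset V A l (prod.swap l) ?x\<^sub>0 ?x\<^sub>0)"
    using wdrg x by (intro wdrg_card_Pset_eq) (auto simp: tdist_def)
  then show ?thesis unfolding kval_def loops by simp
qed

lemma double_counting:
  assumes "finite X" "finite Z" "R \<subseteq> X \<times> Z"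
    and "\<And>x. x \<in> X \<Longrightarrow> card {z. (x, z) \<in> R} = b"
    and "\<And>z. z \<in> Z \<Longrightarrow> card {x. (x, z) \<in> R} = c"
  shows "card X * b = card Z * c"
proof -
  have fin: "finite {z. (x, z) \<in> R}" "finite {x. (x, z) \<in> R}" for x z
    using assms(1-3) by (auto intro: finite_subset)
  have "Sigma X (\<lambda>x. {z. (x, z) \<in> R}) = R" using assms(3) by auto
  moreover have "card (Sigma X (\<lambda>x. {z. (x, z) \<in> R})) = card X * b"
    using assms(1,4) fin by simp
  ultimately have "card R = card X * b" by simp
  moreover have "prod.swap ` Sigma Z (\<lambda>z. {x. (x, z) \<in> R}) = R" using assms(3) by force
  moreover have "card (prod.swap ` Sigma Z (\<lambda>z. {x. (x, z) \<in> R})) = card Z * c"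
    using assms(2,5) fin by (simp add: card_image)
  ultimately show ?thesis by simp
qed

lemma kval_swap:
  assumes wdrg: "wdrg V A"
  shows "kval V A (prod.swap l) = kval V A l"
proof -
  have "V \<noteq> {}" using wdrg by (simp add: wdrg_def strongly_connected_def)
  moreover have "card V * kval V A l = card V * kval V A (prod.swap l)"
  proof (rule double_counting[where R = "{(x, y). x \<in> V \<and> y \<in> V \<and> tdist A x y = l}"])
    show "card {y. (x, y) \<in> {(x, y). x \<in> V \<and> y \<in> V \<and> tdist A x y = l}} = kval V A l"
      if "x \<in> V" for x
      using card_tdist_eq_kval[OF wdrg that] that by (simp add: Collect_conj_eq[symmetric])
    show "card {x. (x, y) \<in> {(x, y). x \<in> V \<and> y \<in> V \<and> tdist A x y = l}} = kval V A (prod.swap l)"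
      if "y \<in> V" for y
      using card_tdist_eq_kval[OF wdrg that, of "prod.swap l"] that
      by (simp add: tdist_def prod_eq_iff conj_commute)
  qed (use wdrg_finite[OF wdrg] in auto)
  ultimately show ?thesis using wdrg_finite[OF wdrg] by simp
qed

text \<open>The identity \<open>k_\<alpha> p^\<alpha>_{\<gamma>,\<beta>^T} = k_\<gamma> p^\<gamma>_{\<alpha>,\<beta>}\<close>: both sides count the pairs
  \<open>(w, w')\<close> with \<open>tdist u w = \<alpha>\<close>, \<open>tdist u w' = \<gamma>\<close> and \<open>tdist w w' = \<beta>\<close>.\<close>

lemma kval_mult_card_Pset:
  assumes wdrg: "wdrg V A" and V: "u \<in> V" "v \<in> V" "x \<in> V" "y \<in> V"
    and uv: "tdist A u v = \<alpha>" and xy: "tdist A x y = \<gamma>"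
  shows "kval V A \<alpha> * card (Pset V A \<gamma> (prod.swap \<beta>) u v) = kval V A \<gamma> * card (Pset V A \<alpha> \<beta> x y)"
proof -
  define R where "R = {(w, w'). tdist A u w = \<alpha> \<and> w \<in> V \<and> w' \<in> Pset V A \<gamma> (prod.swap \<beta>) u w}"
  have "card {w \<in> V. tdist A u w = \<alpha>} * card (Pset V A \<gamma> (prod.swap \<beta>) u v)
      = card {w' \<in> V. tdist A u w' = \<gamma>} * card (Pset V A \<alpha> \<beta> x y)"
  proof (rule double_counting[where R = R])
    fix w assume w: "w \<in> {w \<in> V. tdist A u w = \<alpha>}"
    then have "{w'. (w, w') \<in> R} = Pset V A \<gamma> (prod.swap \<beta>) u w" by (auto simp: R_def)
    also have "card \<dots> = card (Pset V A \<gamma> (prod.swap \<beta>) u v)"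
      using w V uv by (intro wdrg_card_Pset_eq[OF wdrg]) auto
    finally show "card {w'. (w, w') \<in> R} = card (Pset V A \<gamma> (prod.swap \<beta>) u v)" .
  next
    fix w' assume w': "w' \<in> {w' \<in> V. tdist A u w' = \<gamma>}"
    then have "{w. (w, w') \<in> R} = Pset V A \<alpha> \<beta> u w'"
      by (auto simp: R_def Pset_def tdist_def prod_eq_iff)
    also have "card \<dots> = card (Pset V A \<alpha> \<beta> x y)"
      using w' V xy by (intro wdrg_card_Pset_eq[OF wdrg]) auto
    finally show "card {w. (w, w') \<in> R} = card (Pset V A \<alpha> \<beta> x y)" .
  qed (auto simp: R_def Pset_def wdrg_finite[OF wdrg])
  then show ?thesis unfolding card_tdist_eq_kval[OF wdrg V(1)] by simp
qed

lemma Pset_eq_if_subset_kval_le: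
  assumes wdrg: "wdrg V A" and V: "u \<in> V" "v \<in> V" "x \<in> V" "y \<in> V"
    and uv: "tdist A u v = \<alpha>" and xy: "tdist A x y = \<gamma>"
    and sub: "Pset V A \<alpha> \<beta> x y \<subseteq> Pset V A \<gamma> (prod.swap \<beta>) u v"
    and le: "kval V A \<gamma> \<le> kval V A \<alpha>"
  shows "Pset V A \<gamma> (prod.swap \<beta>) u v = Pset V A \<alpha> \<beta> x y"
proof -
  have "0 < card {w \<in> V. tdist A u w = \<alpha>}"
    using V uv wdrg_finite[OF wdrg] by (auto simp: card_gt_0_iff)
  then have pos: "0 < kval V A \<alpha>" unfolding card_tdist_eq_kval[OF wdrg V(1)] .
  have "kval V A \<alpha> * card (Pset V A \<gamma> (prod.swap \<beta>) u v) \<le> kval V A \<alpha> * card (Pset V A \<alpha> \<beta> x y)"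
    using kval_mult_card_Pset[OF wdrg V uv xy, of \<beta>] le by simp
  then have "card (Pset V A \<gamma> (prod.swap \<beta>) u v) \<le> card (Pset V A \<alpha> \<beta> x y)"
    using pos by simp
  then show ?thesis using card_seteq[OF finite_Pset[OF wdrg] sub] by simp
qed

section \<open>Closed walks of arcs of a given type\<close>

lemma cyc_add_length [simp]: "cyc ws (j + int (length ws)) = cyc ws j"
  by (simp add: cyc_def)

lemma cyc_mod [simp]: "cyc ws (j mod int (length ws)) = cyc ws j"
  by (simp add: cyc_def)

lemma cyc_nth: "t < length ws \<Longrightarrow> cyc ws (int t) = ws ! t"
  by (simp add: cyc_def)

lemma cyc_Suc_nth: "t < length ws \<Longrightarrow> cyc ws (int t + 1) = ws ! ((t + 1) mod length ws)"
  by (simp add: cyc_def nat_mod_distrib nat_add_distrib)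

lemma cyc_consecutive_iff:
  assumes "ws \<noteq> []"
  shows "(\<forall>j. P (cyc ws j) (cyc ws (j + 1)))
    \<longleftrightarrow> (\<forall>t<length ws. P (cyc ws (int t)) (cyc ws (int t + 1)))"
proof (intro iffI allI impI)
  fix j :: int
  assume all: "\<forall>t<length ws. P (cyc ws (int t)) (cyc ws (int t + 1))"
  define t where "t = nat (j mod int (length ws))"
  have t: "t < length ws" "int t = j mod int (length ws)"
    using assms by (auto simp: t_def nat_less_iff)
  have "cyc ws (int t + 1) = cyc ws (j + 1)"
    using cyc_mod[of ws "int t + 1"] cyc_mod[of ws "j + 1"] by (simp add: t(2) mod_add_left_eq)
  then show "P (cyc ws j) (cyc ws (j + 1))" using all t by (metis cyc_mod)
qed simp

lemma cyc_map_upt_consecutive: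
  assumes "0 < n" "g n = g 0" "\<And>t. t < n \<Longrightarrow> P (g t) (g (Suc t))"
  shows "P (cyc (map g [0..<n]) j) (cyc (map g [0..<n]) (j + 1))"
proof -
  have "P (cyc (map g [0..<n]) (int t)) (cyc (map g [0..<n]) (int t + 1))" if "t < n" for t
  proof -
    have "g ((t + 1) mod n) = g (Suc t)" using assms(2) that by (cases "Suc t = n") auto
    then show ?thesis using assms(3)[OF that] that by (simp add: cyc_nth cyc_Suc_nth)
  qed
  then show ?thesis using cyc_consecutive_iff[of "map g [0..<n]" P] assms(1) by simp
qed

lemma cyc_list_update:
  assumes "ws \<noteq> []"
  shows "cyc (ws[nat (k mod int (length ws)) := z]) j
    = (if j mod int (length ws) = k mod int (length ws) then z else cyc ws j)"
proof -
  have pos: "0 < int (length ws)" using assms by simp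
  then have "nat (j mod int (length ws)) < length ws" "nat (k mod int (length ws)) < length ws"
    by (simp_all add: nat_less_iff)
  moreover have "nat (k mod int (length ws)) = nat (j mod int (length ws))
      \<longleftrightarrow> j mod int (length ws) = k mod int (length ws)"
    using pos by (simp add: nat_eq_iff2)
  ultimately show ?thesis by (auto simp: cyc_def)
qed

lemma mod_add_neq:
  fixes k d :: int
  assumes "0 < \<bar>d\<bar>" "\<bar>d\<bar> < m"
  shows "(k + d) mod m \<noteq> k mod m"
proof
  assume "(k + d) mod m = k mod m"
  then have "m dvd d" by (simp add: mod_eq_dvd_iff)
  then show False using dvd_imp_le_int[of d m] assms by auto
qed

text \<open>Closed walks, unlike circuits, may repeat vertices, so a vertex of a closed walk can be
  replaced without re-establishing distinctness.\<close>

definition type_walk :: "('a \<times> 'a) set \<Rightarrow> nat \<Rightarrow> 'a list \<Rightarrow> bool" where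
  "type_walk A r ws \<longleftrightarrow> ws \<noteq> [] \<and> (\<forall>j. arc_of_type A r (cyc ws j) (cyc ws (j + 1)))"

lemma type_walk_arc: "type_walk A r ws \<Longrightarrow> arc_of_type A r (cyc ws j) (cyc ws (j + 1))"
  by (simp add: type_walk_def)

lemma type_circuit_iff_type_walk: "type_circuit A r ws \<longleftrightarrow> type_walk A r ws \<and> distinct ws"
proof (cases "ws = []")
  case False
  then show ?thesis
    using cyc_consecutive_iff[OF False, of "arc_of_type A r"]
    by (auto simp: type_circuit_def type_walk_def arc_of_type_def cyc_nth cyc_Suc_nth)
qed (simp add: type_circuit_def type_walk_def)

lemma type_walk_length_gt:
  assumes walk: "type_walk A r ws"
  shows "r < length ws"
proof -
  let ?X = "cyc ws" and ?n = "length ws"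
  have arcs: "(?X t, ?X (t + 1)) \<in> A" for t
    using type_walk_arc[OF walk] by (simp add: arc_of_type_def)
  have n: "0 < ?n" using walk by (simp add: type_walk_def)
  have "(?X 1, ?X (1 + int (?n - 1))) \<in> A ^^ (?n - 1)" by (rule walk_relpow[where c = ?X, OF arcs])
  moreover have "1 + int (?n - 1) = 0 + int ?n" using n by linarith
  then have "?X (1 + int (?n - 1)) = ?X 0" by (metis cyc_add_length)
  ultimately have "ddist A (?X 1) (?X 0) \<le> ?n - 1" by (metis ddist_le)
  moreover have "ddist A (?X 1) (?X 0) = r"
    using type_walk_arc[OF walk, of 0] by (simp add: arc_of_type_def)
  ultimately show ?thesis using n by linarith
qed

lemma cyc_list_update_consecutive:
  assumes len: "2 \<le> length ws" and all: "\<And>j. P (cyc ws j) (cyc ws (j + 1))"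
    and new: "P (cyc ws (k - 1)) z" "P z (cyc ws (k + 1))"
  shows "P (cyc (ws[nat (k mod int (length ws)) := z]) j)
    (cyc (ws[nat (k mod int (length ws)) := z]) (j + 1))"
proof -
  let ?n = "int (length ws)"
  have upd: "cyc (ws[nat (k mod ?n) := z]) i = (if i mod ?n = k mod ?n then z else cyc ws i)" for i
    using len by (intro cyc_list_update) auto
  have succ: "(i + 1) mod ?n \<noteq> i mod ?n" for i
    using mod_add_neq[of 1 ?n i] len by simp
  consider "j mod ?n = k mod ?n" | "(j + 1) mod ?n = k mod ?n"
    | "j mod ?n \<noteq> k mod ?n" "(j + 1) mod ?n \<noteq> k mod ?n" by blast
  then show ?thesis
  proof cases
    case 1
    then have "cyc ws (j + 1) = cyc ws (k + 1)" by (metis cyc_mod mod_add_left_eq)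
    then show ?thesis using 1 succ[of j] new(2) by (simp add: upd)
  next
    case 2
    then have "cyc ws j = cyc ws (k - 1)" by (metis cyc_mod mod_diff_left_eq add_diff_cancel_right')
    then show ?thesis using 2 succ[of j] new(1) by (simp add: upd)
  next
    case 3
    then show ?thesis using all by (simp add: upd)
  qed
qed

lemma type_walk_list_update:
  assumes walk: "type_walk A r ws" and len: "2 \<le> length ws"
    and new: "arc_of_type A r (cyc ws (k - 1)) z" "arc_of_type A r z (cyc ws (k + 1))"
  shows "type_walk A r (ws[nat (k mod int (length ws)) := z])"
  using cyc_list_update_consecutive[where P = "arc_of_type A r", OF len type_walk_arc[OF walk] new]
    walk
  by (simp add: type_walk_def)

lemma type_walk_shorten:
  assumes walk: "type_walk A r ws" and "\<not> distinct ws"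
  shows "\<exists>ws'. type_walk A r ws' \<and> length ws' < length ws"
proof -
  obtain i j where ij: "i < j" "j < length ws" "ws ! i = ws ! j"
    using assms(2) by (metis distinct_conv_nth linorder_neqE_nat)
  define g where "g t = cyc ws (int (i + t))" for t
  have "g (j - i) = g 0" using ij by (simp add: g_def cyc_nth)
  moreover have "arc_of_type A r (g t) (g (Suc t))" for t
    using type_walk_arc[OF walk, of "int (i + t)"] by (simp add: g_def algebra_simps)
  ultimately have "type_walk A r (map g [0..<j - i])"
    using ij cyc_map_upt_consecutive[of "j - i" g "arc_of_type A r"] by (simp add: type_walk_def)
  then show ?thesis using ij by (intro exI[of _ "map g [0..<j - i]"]) auto
qed

lemma type_walk_contains_circuit:
  "type_walk A r ws \<Longrightarrow> \<exists>ys. type_circuit A r ys \<and> length ys \<le> length ws"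
proof (induction "length ws" arbitrary: ws rule: less_induct)
  case less
  show ?case
  proof (cases "distinct ws")
    case True
    then show ?thesis using less.prems by (auto simp: type_circuit_iff_type_walk)
  next
    case False
    then obtain ws' where "type_walk A r ws'" "length ws' < length ws"
      using type_walk_shorten[OF less.prems] by blast
    then show ?thesis using less.hyps by fastforce
  qed
qed

section \<open>Two-step distances on closed walks\<close>

lemma tdist_two_step_closed_walk:
  assumes wdrg: "wdrg V A" and len: "length ws = q" and q: "3 \<le> q"
    and arcs: "\<And>t. (cyc ws t, cyc ws (t + 1)) \<in> A"
    and typed: "arc_of_type A (q - 1) (cyc ws (s - 1)) (cyc ws s)"
      "arc_of_type A (q - 1) (cyc ws s) (cyc ws (s + 1))"
  shows "tdist A (cyc ws s) (cyc ws (s + 2)) = (2, q - 2)"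
proof -
  let ?c = "cyc ws"
  have walk: "(?c t, ?c (t + int n)) \<in> A ^^ n" for t n
    by (rule walk_relpow[where c = ?c, OF arcs])
  have period: "?c (t + int q) = ?c t" for t
    using cyc_add_length[of ws t] len by simp
  have V: "?c t \<in> V" for t
    using wdrg_arc_in_V[OF wdrg arcs[of t]] by simp
  have reach: "(?c t, ?c t') \<in> A\<^sup>*" for t t'
    using wdrg_rtrancl[OF wdrg V V] .
  have ret: "ddist A (?c (s + 1)) (?c s) = q - 1" "ddist A (?c s) (?c (s - 1)) = q - 1"
    using typed by (auto simp: arc_of_type_def)
  have "?c (s + 2 + int (q - 2)) = ?c s"
    using period[of s] q by (simp add: of_nat_diff)
  then have "ddist A (?c (s + 2)) (?c s) \<le> q - 2"
    using ddist_le[OF walk[of "s + 2" "q - 2"]] by simp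
  moreover have "ddist A (?c (s + 1)) (?c s)
      \<le> ddist A (?c (s + 1)) (?c (s + 2)) + ddist A (?c (s + 2)) (?c s)"
    by (rule ddist_triangle[OF reach reach])
  moreover have "ddist A (?c (s + 1)) (?c (s + 2)) \<le> 1"
    using ddist_arc_le arcs[of "s + 1"] by (simp add: add.assoc)
  ultimately have ret2: "ddist A (?c (s + 2)) (?c s) = q - 2"
    using ret(1) q by linarith
  have "ddist A (?c s) (?c (s + 2)) \<le> 2"
    using ddist_le[OF walk[of s 2]] by simp
  moreover have "ddist A (?c s) (?c (s + 2)) \<noteq> 0"
  proof
    assume "ddist A (?c s) (?c (s + 2)) = 0"
    then have "?c s = ?c (s + 2)" using ddist_eq_0D[OF reach] by blast
    then show False
      using ddist_arc_le[OF arcs[of "s + 1"]] ret(1) q by (simp add: add.assoc)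
  qed
  moreover have "ddist A (?c s) (?c (s + 2)) \<noteq> 1"
  proof
    assume "ddist A (?c s) (?c (s + 2)) = 1"
    \<comment> \<open>then \<open>c\<^sub>s \<rightarrow> c\<^sub>s\<^sub>+\<^sub>2 \<rightarrow> \<dots> \<rightarrow> c\<^sub>s\<^sub>-\<^sub>1\<close> is too short a return path for the arc \<open>c\<^sub>s\<^sub>-\<^sub>1 \<rightarrow> c\<^sub>s\<close>\<close>
    then have "(?c s, ?c (s + 2)) \<in> A" using ddist_eq_1D[OF reach] by blast
    moreover have "?c (s + 2 + int (q - 3)) = ?c (s - 1)"
      using period[of "s - 1"] q by (simp add: of_nat_diff algebra_simps)
    then have "(?c (s + 2), ?c (s - 1)) \<in> A ^^ (q - 3)" using walk[of "s + 2" "q - 3"] by simp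
    ultimately have "(?c s, ?c (s - 1)) \<in> A ^^ Suc (q - 3)" by (rule relpow_Suc_I2)
    then have "ddist A (?c s) (?c (s - 1)) \<le> Suc (q - 3)" by (rule ddist_le)
    then show False using ret(2) q by simp
  qed
  ultimately show ?thesis using ret2 by (simp add: tdist_def)
qed

lemma exists_mid_arcs:
  assumes wdrg: "wdrg V A" and r: "1 \<le> r" and p: "0 < pnum V A (1, r) (1, r) l"
    and xy: "x \<in> V" "y \<in> V" "tdist A x y = l"
  shows "\<exists>z. arc_of_type A r x z \<and> arc_of_type A r z y"
proof -
  have "0 < card (Pset V A (1, r) (1, r) x y)"
    using p pnum_eq_card_Pset[OF wdrg xy(1,2)] xy(3) by simp
  then obtain z where "z \<in> Pset V A (1, r) (1, r) x y" by (auto simp: card_gt_0_iff)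
  then show ?thesis using Pset_mid_iff[OF wdrg r xy(1,2)] by blast
qed

definition prefix_typed_walk :: "('a \<times> 'a) set \<Rightarrow> nat \<Rightarrow> nat \<Rightarrow> 'a list \<Rightarrow> bool" where
  "prefix_typed_walk A r n ws \<longleftrightarrow> (\<forall>j. (cyc ws j, cyc ws (j + 1)) \<in> A) \<and>
     (\<forall>t. 0 \<le> t \<and> t < int n \<longrightarrow> arc_of_type A r (cyc ws t) (cyc ws (t + 1)))"

lemma exists_prefix_typed_walk_2:
  assumes wdrg: "wdrg V A" and q: "3 \<le> q" and p: "0 < pnum V A (1, q - 1) (1, q - 1) (2, q - 2)"
  shows "\<exists>ws. length ws = q \<and> prefix_typed_walk A (q - 1) 2 ws"
proof -
  obtain x y where xy: "x \<in> V" "y \<in> V" "tdist A x y = (2, q - 2)"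
    using p unfolding pnum_def by (auto split: if_splits)
  have r: "1 \<le> q - 1" using q by simp
  obtain z where z: "arc_of_type A (q - 1) x z" "arc_of_type A (q - 1) z y"
    using exists_mid_arcs[OF wdrg r p xy] by blast
  have "(y, x) \<in> A ^^ (q - 2)"
    using relpow_ddist[OF wdrg_rtrancl[OF wdrg xy(2,1)]] xy(3) by (simp add: tdist_def)
  then obtain f where f: "f 0 = y" "f (q - 2) = x" "\<And>i. i < q - 2 \<Longrightarrow> (f i, f (Suc i)) \<in> A"
    by (auto simp: relpow_fun_conv)
  define g where "g t = (if t = 0 then x else if t = 1 then z else f (t - 2))" for t
  define ws where "ws = map g [0..<q]"
  have "(g t, g (Suc t)) \<in> A" if "t < q" for t
  proof -
    consider "t = 0" | "t = 1" | "2 \<le> t" by linarith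
    then show ?thesis
    proof cases
      case 3
      then have "Suc t - 2 = Suc (t - 2)" "t - 2 < q - 2" using that by auto
      then show ?thesis using f(3)[of "t - 2"] 3 by (simp add: g_def)
    qed (use z f(1) in \<open>auto simp: g_def arc_of_type_def\<close>)
  qed
  moreover have "g q = g 0" using q f(2) by (simp add: g_def)
  ultimately have "(cyc ws j, cyc ws (j + 1)) \<in> A" for j
    unfolding ws_def using q
    by (intro cyc_map_upt_consecutive[where P = "\<lambda>u v. (u, v) \<in> A"]) auto
  moreover have "arc_of_type A (q - 1) (cyc ws t) (cyc ws (t + 1))" if "0 \<le> t" "t < 2" for t
  proof -
    have "cyc ws 0 = x" "cyc ws 1 = z" "cyc ws 2 = y"
      using q f(1) cyc_nth[of 0 ws] cyc_nth[of 1 ws] cyc_nth[of 2 ws]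
      by (simp_all add: ws_def g_def)
    moreover have "t = 0 \<or> t = 1" using that by auto
    ultimately show ?thesis using z by auto
  qed
  ultimately show ?thesis
    unfolding prefix_typed_walk_def by (intro exI[of _ ws]) (auto simp: ws_def)
qed

text \<open>The neighbours of the vertex right after the typed prefix are at distance \<open>(2, q - 2)\<close>,
  so that vertex can be replaced by a midpoint joined to both by arcs of type \<open>(1, q - 1)\<close>.\<close>

lemma prefix_typed_walk_extend:
  assumes wdrg: "wdrg V A" and q: "3 \<le> q" and p: "0 < pnum V A (1, q - 1) (1, q - 1) (2, q - 2)"
    and len: "length ws = q" and n: "2 \<le> n" "n < q" and ws: "prefix_typed_walk A (q - 1) n ws"
  shows "\<exists>ws'. length ws' = q \<and> prefix_typed_walk A (q - 1) (Suc n) ws'"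
proof -
  let ?c = "cyc ws"
  have arcs: "(?c j, ?c (j + 1)) \<in> A" for j
    using ws by (simp add: prefix_typed_walk_def)
  have typed: "arc_of_type A (q - 1) (?c t) (?c (t + 1))" if "0 \<le> t" "t < int n" for t
    using ws that by (simp add: prefix_typed_walk_def)
  have "tdist A (?c (int n - 1)) (?c (int n + 1)) = (2, q - 2)"
    using tdist_two_step_closed_walk[OF wdrg len q arcs, of "int n - 1"]
      typed[of "int n - 2"] typed[of "int n - 1"] n
    by (simp add: add.commute)
  moreover have "?c t \<in> V" for t using wdrg_arc_in_V[OF wdrg arcs[of t]] by simp
  moreover have "1 \<le> q - 1" using q by simp
  ultimately obtain z where z: "arc_of_type A (q - 1) (?c (int n - 1)) z"
      "arc_of_type A (q - 1) z (?c (int n + 1))"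
    using exists_mid_arcs[OF wdrg _ p] by blast
  define ws' where "ws' = ws[nat (int n mod int (length ws)) := z]"
  have upd: "cyc ws' t = (if t mod int q = int n mod int q then z else ?c t)" for t
    unfolding ws'_def using len q by (subst cyc_list_update) auto
  have "(cyc ws' j, cyc ws' (j + 1)) \<in> A" for j
    unfolding ws'_def using len q z
    by (intro cyc_list_update_consecutive[where P = "\<lambda>u v. (u, v) \<in> A", OF _ arcs])
      (auto simp: arc_of_type_def)
  moreover have "arc_of_type A (q - 1) (cyc ws' t) (cyc ws' (t + 1))"
    if "0 \<le> t" "t < int (Suc n)" for t
  proof -
    have nq: "int n mod int q = int n" "(int n + 1) mod int q \<noteq> int n"
      using n mod_add_neq[of 1 "int q" "int n"] q by auto
    have "t < int n + 1" using that by simp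
    then consider "t < int n - 1" | "t = int n - 1" | "t = int n" by linarith
    then show ?thesis
    proof cases
      case 1
      then show ?thesis using typed[of t] that n by (simp add: upd)
    next
      case 2
      then show ?thesis using z(1) n by (simp add: upd nq)
    next
      case 3
      then show ?thesis using z(2) by (simp add: upd nq)
    qed
  qed
  ultimately show ?thesis
    unfolding prefix_typed_walk_def using len by (intro exI[of _ ws']) (auto simp: ws'_def)
qed

lemma exists_type_walk_of_length:
  assumes wdrg: "wdrg V A" and q: "3 \<le> q" and p: "0 < pnum V A (1, q - 1) (1, q - 1) (2, q - 2)"
  shows "\<exists>ws. type_walk A (q - 1) ws \<and> length ws = q"
proof -
  have "\<exists>ws. length ws = q \<and> prefix_typed_walk A (q - 1) n ws" if "2 \<le> n" "n \<le> q" for n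
    using that
  proof (induction n rule: nat_induct_at_least)
    case base
    show ?case by (rule exists_prefix_typed_walk_2[OF wdrg q p])
  next
    case (Suc n)
    then show ?case using prefix_typed_walk_extend[OF wdrg q p] by auto
  qed
  then have "\<exists>ws. length ws = q \<and> prefix_typed_walk A (q - 1) q ws" using q by simp
  then obtain ws where len: "length ws = q" and ws: "prefix_typed_walk A (q - 1) q ws" by blast
  moreover have "ws \<noteq> []" using len q by auto
  ultimately show ?thesis
    using cyc_consecutive_iff[of ws "arc_of_type A (q - 1)"]
    by (auto simp: type_walk_def prefix_typed_walk_def)
qed

lemma minimal_type_circuit_length:
  assumes wdrg: "wdrg V A" and q: "3 \<le> q" and p: "0 < pnum V A (1, q - 1) (1, q - 1) (2, q - 2)"
    and circuit: "type_circuit A (q - 1) xs"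
    and minimal: "\<forall>ys. type_circuit A (q - 1) ys \<longrightarrow> length xs \<le> length ys"
  shows "length xs = q"
proof -
  obtain ws where "type_walk A (q - 1) ws" "length ws = q"
    using exists_type_walk_of_length[OF wdrg q p] by blast
  then obtain ys where "type_circuit A (q - 1) ys" "length ys \<le> q"
    using type_walk_contains_circuit by fastforce
  then have "length xs \<le> q" using minimal by fastforce
  moreover have "q - 1 < length xs"
    using type_walk_length_gt circuit by (auto simp: type_circuit_iff_type_walk)
  ultimately show ?thesis by linarith
qed

definition two_step_tdist :: "('a \<times> 'a) set \<Rightarrow> nat \<Rightarrow> nat \<Rightarrow> nat \<times> nat \<Rightarrow> bool" where
  "two_step_tdist A r m L \<longleftrightarrow>
     (\<forall>ws j. type_walk A r ws \<and> length ws = m \<longrightarrow> tdist A (cyc ws j) (cyc ws (j + 2)) = L)"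

lemma two_step_tdist_length_q:
  assumes wdrg: "wdrg V A" and q: "3 \<le> q"
  shows "two_step_tdist A (q - 1) q (2, q - 2)"
  unfolding two_step_tdist_def
proof (intro allI impI)
  fix ws j assume ws: "type_walk A (q - 1) ws \<and> length ws = q"
  then have "(cyc ws t, cyc ws (t + 1)) \<in> A" for t
    by (simp add: type_walk_def arc_of_type_def)
  moreover have "arc_of_type A (q - 1) (cyc ws (j - 1)) (cyc ws j)"
    using type_walk_arc[of A "q - 1" ws "j - 1"] ws by simp
  ultimately show "tdist A (cyc ws j) (cyc ws (j + 2)) = (2, q - 2)"
    using tdist_two_step_closed_walk[OF wdrg _ q, of ws j] type_walk_arc[of A "q - 1" ws j] ws
    by simp
qed

lemma two_step_tdist_if_unique_relation:
  assumes wdrg: "wdrg V A" and r: "1 \<le> r" and unique: "{l. pnum V A (1, r) (1, r) l \<noteq> 0} = {L}"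
  shows "two_step_tdist A r m L"
  unfolding two_step_tdist_def
proof (intro allI impI)
  fix ws j assume "type_walk A r ws \<and> length ws = m"
  then have arcs: "arc_of_type A r (cyc ws j) (cyc ws (j + 1))"
      "arc_of_type A r (cyc ws (j + 1)) (cyc ws (j + 2))"
    using type_walk_arc[of A r ws j] type_walk_arc[of A r ws "j + 1"] by (simp_all add: add.assoc)
  then have V: "cyc ws j \<in> V" "cyc ws (j + 2) \<in> V" using arc_of_type_iff_tdist[OF wdrg r] by auto
  have "cyc ws (j + 1) \<in> Pset V A (1, r) (1, r) (cyc ws j) (cyc ws (j + 2))"
    using Pset_mid_iff[OF wdrg r V] arcs by blast
  then have "pnum V A (1, r) (1, r) (tdist A (cyc ws j) (cyc ws (j + 2))) \<noteq> 0"
    using pnum_eq_card_Pset[OF wdrg V] finite_Pset[OF wdrg] by (auto simp: card_eq_0_iff)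
  then show "tdist A (cyc ws j) (cyc ws (j + 2)) = L" using unique by blast
qed

lemma minimal_type_circuit_two_step_tdist:
  assumes wdrg: "wdrg V A" and q: "3 \<le> q" and circuit: "type_circuit A (q - 1) xs"
    and minimal: "\<forall>ys. type_circuit A (q - 1) ys \<longrightarrow> length xs \<le> length ys"
    and hyp: "0 < pnum V A (1, q - 1) (1, q - 1) (2, q - 2)
      \<or> card {l. pnum V A (1, q - 1) (1, q - 1) l \<noteq> 0} = 1"
  shows "\<exists>L. two_step_tdist A (q - 1) (length xs) L"
  using hyp
proof
  assume "0 < pnum V A (1, q - 1) (1, q - 1) (2, q - 2)"
  then have "length xs = q" using minimal_type_circuit_length[OF wdrg q _ circuit minimal] by simp
  then show ?thesis using two_step_tdist_length_q[OF wdrg q] by auto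
next
  assume "card {l. pnum V A (1, q - 1) (1, q - 1) l \<noteq> 0} = 1"
  then obtain L where "{l. pnum V A (1, q - 1) (1, q - 1) l \<noteq> 0} = {L}"
    by (auto simp: card_1_singleton_iff)
  moreover have "1 \<le> q - 1" using q by simp
  ultimately show ?thesis using two_step_tdist_if_unique_relation[OF wdrg] by blast
qed

lemma two_step_tdist_through_mid:
  assumes wdrg: "wdrg V A" and r: "1 \<le> r" and walk: "type_walk A r ws" and len: "3 \<le> length ws"
    and two: "two_step_tdist A r (length ws) L"
    and z: "z \<in> Pset V A (1, r) (1, r) (cyc ws (j - 1)) (cyc ws (j + 1))"
  shows "tdist A (cyc ws (j - 2)) z = L \<and> tdist A z (cyc ws (j + 2)) = L"
proof -
  let ?X = "cyc ws" and ?n = "int (length ws)"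
  define ws' where "ws' = ws[nat (j mod ?n) := z]"
  have XV: "?X t \<in> V" for t
    using type_walk_arc[OF walk, of t] arc_of_type_iff_tdist[OF wdrg r] by auto
  have "arc_of_type A r (?X (j - 1)) z" "arc_of_type A r z (?X (j + 1))"
    using z Pset_mid_iff[OF wdrg r XV XV] by auto
  then have walk': "type_walk A r ws'"
    unfolding ws'_def using type_walk_list_update[OF walk] len by simp
  have upd: "cyc ws' t = (if t mod ?n = j mod ?n then z else ?X t)" for t
    unfolding ws'_def using len by (intro cyc_list_update) auto
  have "(j + 2) mod ?n \<noteq> j mod ?n" "(j + - 2) mod ?n \<noteq> j mod ?n"
    using mod_add_neq[of 2 ?n j] mod_add_neq[of "- 2" ?n j] len by auto
  then have ws'_cyc: "cyc ws' j = z" "cyc ws' (j - 2) = ?X (j - 2)" "cyc ws' (j + 2) = ?X (j + 2)"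
    by (simp_all add: upd)
  have "length ws' = length ws" by (simp add: ws'_def)
  then have "tdist A (cyc ws' t) (cyc ws' (t + 2)) = L" for t
    using two walk' unfolding two_step_tdist_def by blast
  from this[of "j - 2"] this[of j] show ?thesis by (simp add: ws'_cyc)
qed

lemma Pset_two_step_eq:
  assumes wdrg: "wdrg V A" and r: "1 \<le> r" and walk: "type_walk A r ws" and len: "3 \<le> length ws"
    and two: "two_step_tdist A r (length ws) L" and kval_le: "kval V A L \<le> kval V A (1, r)"
  shows "Pset V A L (r, 1) (cyc ws (j - 2)) (cyc ws (j - 1))
      = Pset V A (1, r) (1, r) (cyc ws (j - 1)) (cyc ws (j + 1))"
    and "Pset V A (r, 1) L (cyc ws (j + 1)) (cyc ws (j + 2))
      = Pset V A (1, r) (1, r) (cyc ws (j - 1)) (cyc ws (j + 1))"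
proof -
  let ?X = "cyc ws" and ?Y = "Pset V A (1, r) (1, r) (cyc ws (j - 1)) (cyc ws (j + 1))"
  have XV: "?X t \<in> V" and Xt: "tdist A (?X t) (?X (t + 1)) = (1, r)" for t
    using type_walk_arc[OF walk, of t] arc_of_type_iff_tdist[OF wdrg r] by auto
  have Xt': "tdist A (?X (j - 2)) (?X (j - 1)) = (1, r)"
      "tdist A (?X (j + 2)) (?X (j + 1)) = (r, 1)"
    using Xt[of "j - 2"] Xt[of "j + 1"] by (simp_all add: tdist_def add.assoc)
  have "tdist A (?X (j - 1)) (?X (j - 1 + 2)) = L"
    using two walk unfolding two_step_tdist_def by blast
  then have mid: "tdist A (?X (j - 1)) (?X (j + 1)) = L" by (simp add: add.commute)
  have around: "tdist A (?X (j - 2)) z = L \<and> tdist A z (?X (j + 2)) = L" if "z \<in> ?Y" for z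
    using two_step_tdist_through_mid[OF wdrg r walk len two that] .
  show "Pset V A L (r, 1) (?X (j - 2)) (?X (j - 1)) = ?Y"
  proof -
    have "?Y \<subseteq> Pset V A L (prod.swap (1, r)) (?X (j - 2)) (?X (j - 1))"
      using around unfolding Pset_def by (auto simp: tdist_def)
    then show ?thesis
      using Pset_eq_if_subset_kval_le[OF wdrg XV XV XV XV Xt'(1) mid, of "(1, r)"] kval_le by simp
  qed
  show "Pset V A (r, 1) L (?X (j + 1)) (?X (j + 2)) = ?Y"
  proof -
    have Y_transpose: "Pset V A (r, 1) (r, 1) (?X (j + 1)) (?X (j - 1)) = ?Y"
      using Pset_transpose[of V A "(1, r)" "(1, r)" "?X (j - 1)" "?X (j + 1)"] by simp
    have "?Y \<subseteq> Pset V A (prod.swap L) (prod.swap (r, 1)) (?X (j + 2)) (?X (j + 1))"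
    proof
      fix z assume z: "z \<in> ?Y"
      then have "tdist A (?X (j + 2)) z = prod.swap L"
        using around[OF z] tdist_swap_eq_iff[of A "?X (j + 2)" z "prod.swap L"] by simp
      then show "z \<in> Pset V A (prod.swap L) (prod.swap (r, 1)) (?X (j + 2)) (?X (j + 1))"
        using z unfolding Pset_def by simp
    qed
    moreover have mid': "tdist A (?X (j + 1)) (?X (j - 1)) = prod.swap L"
      using mid tdist_swap_eq_iff[of A "?X (j + 1)" "?X (j - 1)" "prod.swap L"] by simp
    moreover have "kval V A (prod.swap L) \<le> kval V A (r, 1)"
      using kval_le kval_swap[OF wdrg, of L] kval_swap[OF wdrg, of "(1, r)"] by simp
    ultimately have "Pset V A (prod.swap L) (1, r) (?X (j + 2)) (?X (j + 1)) = ?Y"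
      using Pset_eq_if_subset_kval_le[OF wdrg XV XV XV XV Xt'(2) mid', of "(r, 1)"] Y_transpose
      by simp
    then show ?thesis
      using Pset_transpose[of V A "(r, 1)" L "?X (j + 1)" "?X (j + 2)"] by simp
  qed
qed

section \<open>Cayley digraphs\<close>

lemma (in comm_group) m_inv_cancel:
  "x \<in> carrier G \<Longrightarrow> y \<in> carrier G \<Longrightarrow> x \<otimes> (y \<otimes> inv x) = y"
  by (metis inv_closed m_lcomm r_inv r_one)

lemma (in comm_group) m_inv_mult_cancel:
  "x \<in> carrier G \<Longrightarrow> y \<in> carrier G \<Longrightarrow> x \<otimes> inv (x \<otimes> y) = inv y"
  by (simp add: inv_mult m_assoc[symmetric])

locale cayley_digraph = group G for G (structure) +
  fixes S :: "'a set" and A :: "('a \<times> 'a) set"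
  assumes arcs_eq: "A = {(x, y). x \<in> carrier G \<and> y \<in> carrier G \<and> y \<otimes> inv x \<in> S}"
begin

lemma arc_translate_iff:
  assumes "u \<in> carrier G" "v \<in> carrier G" "c \<in> carrier G"
  shows "(u \<otimes> c, v \<otimes> c) \<in> A \<longleftrightarrow> (u, v) \<in> A"
proof -
  have "v \<otimes> c \<otimes> inv (u \<otimes> c) = v \<otimes> c \<otimes> (inv c \<otimes> inv u)"
    using assms by (simp add: inv_mult_group)
  also have "\<dots> = v \<otimes> (c \<otimes> (inv c \<otimes> inv u))"
    using assms by (simp add: m_assoc)
  also have "c \<otimes> (inv c \<otimes> inv u) = inv u"
    using assms by (simp add: m_assoc[symmetric])
  finally show ?thesis using assms by (simp add: arcs_eq)
qed

lemma relpow_translate: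
  "(u, v) \<in> A ^^ n \<Longrightarrow> u \<in> carrier G \<Longrightarrow> c \<in> carrier G \<Longrightarrow> (u \<otimes> c, v \<otimes> c) \<in> A ^^ n"
proof (induction n arbitrary: v)
  case (Suc n)
  then obtain w where w: "(u, w) \<in> A ^^ n" "(w, v) \<in> A" by auto
  then have "w \<in> carrier G" "v \<in> carrier G" by (auto simp: arcs_eq)
  then show ?case using Suc w arc_translate_iff by (meson relpow_Suc_I)
qed simp

lemma relpow_translate_iff:
  assumes "u \<in> carrier G" "v \<in> carrier G" "c \<in> carrier G"
  shows "(u \<otimes> c, v \<otimes> c) \<in> A ^^ n \<longleftrightarrow> (u, v) \<in> A ^^ n"
proof
  assume "(u \<otimes> c, v \<otimes> c) \<in> A ^^ n"
  then have "(u \<otimes> c \<otimes> inv c, v \<otimes> c \<otimes> inv c) \<in> A ^^ n"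
    by (rule relpow_translate) (use assms in auto)
  moreover have "u \<otimes> c \<otimes> inv c = u" "v \<otimes> c \<otimes> inv c = v"
    using assms by (simp_all add: m_assoc)
  ultimately show "(u, v) \<in> A ^^ n" by simp
next
  assume "(u, v) \<in> A ^^ n"
  then show "(u \<otimes> c, v \<otimes> c) \<in> A ^^ n" using assms(1,3) by (rule relpow_translate)
qed

lemma tdist_translate:
  assumes "u \<in> carrier G" "v \<in> carrier G" "c \<in> carrier G"
  shows "tdist A (u \<otimes> c) (v \<otimes> c) = tdist A u v"
  using assms by (simp add: tdist_def ddist_def relpow_translate_iff)

lemma arc_of_type_translate:
  assumes "u \<in> carrier G" "v \<in> carrier G" "c \<in> carrier G" "arc_of_type A r u v"
  shows "arc_of_type A r (u \<otimes> c) (v \<otimes> c)"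
  using assms by (simp add: arc_of_type_def ddist_def relpow_translate_iff arc_translate_iff)

lemma Pset_translate:
  assumes x: "x \<in> carrier G" and y: "y \<in> carrier G" and c: "c \<in> carrier G"
  shows "Pset (carrier G) A i j (x \<otimes> c) (y \<otimes> c) = (\<lambda>z. z \<otimes> c) ` Pset (carrier G) A i j x y"
proof
  show "(\<lambda>z. z \<otimes> c) ` Pset (carrier G) A i j x y \<subseteq> Pset (carrier G) A i j (x \<otimes> c) (y \<otimes> c)"
    using assms by (auto simp: Pset_def tdist_translate)
  show "Pset (carrier G) A i j (x \<otimes> c) (y \<otimes> c) \<subseteq> (\<lambda>z. z \<otimes> c) ` Pset (carrier G) A i j x y"
  proof
    fix z assume z: "z \<in> Pset (carrier G) A i j (x \<otimes> c) (y \<otimes> c)"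
    define w where "w = z \<otimes> inv c"
    have w: "w \<in> carrier G" "z = w \<otimes> c"
      using z c by (simp_all add: w_def m_assoc Pset_def)
    then have "w \<in> Pset (carrier G) A i j x y"
      using z x y c by (simp add: Pset_def tdist_translate)
    then show "z \<in> (\<lambda>z. z \<otimes> c) ` Pset (carrier G) A i j x y" using w(2) by blast
  qed
qed

end

locale abelian_cayley_digraph = cayley_digraph G S A + comm_group G for G (structure) and S A
begin

text \<open>In additive notation, \<open>Y - a = b - Y\<close> for \<open>Y = P_{i,i}(a, b)\<close>: the reflection
  \<open>y \<mapsto> a + b - y\<close> maps \<open>Y\<close> onto itself because the translation by \<open>a - y\<close> carries
  \<open>(y, b)\<close> to \<open>(a, a + b - y)\<close>.\<close>

lemma Pset_mid_symmetric:
  assumes a: "a \<in> carrier G" and b: "b \<in> carrier G"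
  shows "(\<lambda>y. y \<otimes> inv a) ` Pset (carrier G) A i i a b
    = (\<lambda>y. b \<otimes> inv y) ` Pset (carrier G) A i i a b"
proof -
  let ?P = "Pset (carrier G) A i i a b"
  define \<phi> where "\<phi> y = a \<otimes> b \<otimes> inv y" for y
  have PG: "?P \<subseteq> carrier G" by (auto simp: Pset_def)
  have \<phi>P: "\<phi> y \<in> ?P" if y: "y \<in> ?P" for y
  proof -
    have yG: "y \<in> carrier G" using y PG by auto
    have "b \<otimes> (a \<otimes> inv y) = \<phi> y" "a \<otimes> (b \<otimes> inv y) = \<phi> y"
      using a b yG by (simp_all add: \<phi>_def m_assoc m_lcomm)
    moreover have "y \<otimes> (a \<otimes> inv y) = a" "y \<otimes> (b \<otimes> inv y) = b"
      using a b yG by (simp_all add: m_inv_cancel)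
    ultimately have "tdist A a (\<phi> y) = tdist A y b" "tdist A (\<phi> y) b = tdist A a y"
      using tdist_translate[OF yG b, of "a \<otimes> inv y"] tdist_translate[OF a yG, of "b \<otimes> inv y"] a b yG
      by simp_all
    then show ?thesis using y a b yG by (simp add: Pset_def \<phi>_def)
  qed
  have \<phi>\<phi>: "\<phi> (\<phi> y) = y" if "y \<in> carrier G" for y
    using a b that by (simp add: \<phi>_def m_inv_mult_cancel)
  have "\<phi> ` ?P = ?P"
  proof
    show "?P \<subseteq> \<phi> ` ?P"
    proof
      fix y assume y: "y \<in> ?P"
      show "y \<in> \<phi> ` ?P"
        by (rule image_eqI[where x = "\<phi> y"]) (use \<phi>\<phi> \<phi>P[OF y] y PG in auto)
    qed
  qed (use \<phi>P in blast)
  then have "(\<lambda>y. y \<otimes> inv a) ` ?P = (\<lambda>y. y \<otimes> inv a) ` \<phi> ` ?P" by simp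
  also have "\<dots> = (\<lambda>y. \<phi> y \<otimes> inv a) ` ?P" by (simp only: image_image)
  also have "\<dots> = (\<lambda>y. b \<otimes> inv y) ` ?P"
  proof (rule image_cong[OF refl])
    fix y assume "y \<in> ?P"
    then have yG: "y \<in> carrier G" using PG by auto
    have "\<phi> y \<otimes> inv a = a \<otimes> ((b \<otimes> inv y) \<otimes> inv a)"
      using a b yG by (simp add: \<phi>_def m_assoc)
    also have "\<dots> = b \<otimes> inv y" using a b yG by (simp add: m_inv_cancel)
    finally show "\<phi> y \<otimes> inv a = b \<otimes> inv y" .
  qed
  finally show ?thesis .
qed

lemma type_walk_update_parallelogram:
  assumes wdrg: "wdrg (carrier G) A" and r: "1 \<le> r" and walk: "type_walk A r xs"
    and len: "2 \<le> length xs"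
  shows "type_walk A r
    (xs[nat (k mod int (length xs)) := cyc xs (k + 1) \<otimes> (cyc xs (k - 1) \<otimes> inv (cyc xs k))])"
proof -
  let ?X = "cyc xs"
  have arc: "arc_of_type A r (?X t) (?X (t + 1))" for t using type_walk_arc[OF walk] .
  have X: "?X t \<in> carrier G" for t using arc[of t] arc_of_type_iff_tdist[OF wdrg r] by auto
  define \<delta> \<epsilon> where "\<delta> = ?X (k - 1) \<otimes> inv (?X k)" and "\<epsilon> = ?X (k + 1) \<otimes> inv (?X k)"
  have \<delta>\<epsilon>: "\<delta> \<in> carrier G" "\<epsilon> \<in> carrier G" using X by (simp_all add: \<delta>_def \<epsilon>_def)
  have shifts: "?X k \<otimes> \<delta> = ?X (k - 1)" "?X k \<otimes> \<epsilon> = ?X (k + 1)"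
    "?X (k - 1) \<otimes> \<epsilon> = ?X (k + 1) \<otimes> \<delta>"
    using X by (simp_all add: \<delta>_def \<epsilon>_def m_inv_cancel m_lcomm)
  have "arc_of_type A r (?X (k - 1)) (?X (k + 1) \<otimes> \<delta>)"
    using arc_of_type_translate[OF X X \<delta>\<epsilon>(1) arc[of k]] shifts(1) by simp
  moreover have "arc_of_type A r (?X (k + 1) \<otimes> \<delta>) (?X (k + 1))"
    using arc_of_type_translate[OF X X \<delta>\<epsilon>(2) arc[of "k - 1"]] shifts(2,3) by simp
  ultimately have "type_walk A r (xs[nat (k mod int (length xs)) := ?X (k + 1) \<otimes> \<delta>])"
    by (rule type_walk_list_update[OF walk len])
  then show ?thesis by (simp add: \<delta>_def)
qed

text \<open>Both equalities come from the first part applied to \<open>xs\<close> and to the walk in which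
  \<open>x\<^sub>k\<close> is replaced by the fourth vertex \<open>x\<^sub>k\<^sub>+\<^sub>1 + x\<^sub>k\<^sub>-\<^sub>1 - x\<^sub>k\<close> of the parallelogram.\<close>

lemma Pset_mid_parallelogram:
  fixes k :: int
  assumes wdrg: "wdrg (carrier G) A" and r: "1 \<le> r" and walk: "type_walk A r xs"
    and len: "4 \<le> length xs" and two: "two_step_tdist A r (length xs) L"
    and kval_le: "kval (carrier G) A L \<le> kval (carrier G) A (1, r)"
  defines "\<delta> \<equiv> cyc xs (k - 1) \<otimes> inv (cyc xs k)"
  shows "Pset (carrier G) A (1, r) (1, r) (cyc xs (k + 1) \<otimes> \<delta>) (cyc xs (k + 2))
      = Pset (carrier G) A (1, r) (1, r) (cyc xs k) (cyc xs (k + 2))"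
    and "Pset (carrier G) A (1, r) (1, r) (cyc xs (k + 1) \<otimes> \<delta>) (cyc xs (k + 2))
      = (\<lambda>y. y \<otimes> \<delta>) ` Pset (carrier G) A (1, r) (1, r) (cyc xs (k + 1)) (cyc xs (k + 3))"
proof -
  let ?X = "cyc xs" and ?n = "int (length xs)"
  define z where "z = ?X (k + 1) \<otimes> \<delta>"
  define ys where "ys = xs[nat (k mod ?n) := z]"
  have X: "?X t \<in> carrier G" for t
    using type_walk_arc[OF walk, of t] arc_of_type_iff_tdist[OF wdrg r] by auto
  then have \<delta>G: "\<delta> \<in> carrier G" by (simp add: \<delta>_def)
  have k_shift: "?X k \<otimes> \<delta> = ?X (k - 1)" using X by (simp add: \<delta>_def m_inv_cancel)
  have ys_walk: "type_walk A r ys"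
    using type_walk_update_parallelogram[OF wdrg r walk, of k] len
    by (simp add: ys_def z_def \<delta>_def)
  have ys_len: "3 \<le> length ys" "two_step_tdist A r (length ys) L"
    using len two by (simp_all add: ys_def)
  have upd: "cyc ys t = (if t mod ?n = k mod ?n then z else ?X t)" for t
    unfolding ys_def using len by (intro cyc_list_update) auto
  have "(k + - 1) mod ?n \<noteq> k mod ?n" "(k + 2) mod ?n \<noteq> k mod ?n" "(k + 3) mod ?n \<noteq> k mod ?n"
    using mod_add_neq[of "- 1" ?n k] mod_add_neq[of 2 ?n k] mod_add_neq[of 3 ?n k] len by auto
  then have ys_cyc: "cyc ys k = z" "cyc ys (k - 1) = ?X (k - 1)"
    "cyc ys (k + 2) = ?X (k + 2)" "cyc ys (k + 3) = ?X (k + 3)"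
    by (auto simp: upd)
  have idx: "k + 1 - 2 = k - 1" "k + 1 - 1 = k" "k + 1 + 1 = k + 2" "k + 1 + 2 = k + 3"
    "k + 2 - 2 = k" "k + 2 - 1 = k + 1" "k + 2 + 1 = k + 3" by simp_all
  note part_one_xs = Pset_two_step_eq[OF wdrg r walk _ two kval_le]
  note part_one_ys = Pset_two_step_eq[OF wdrg r ys_walk ys_len kval_le]
  have "Pset (carrier G) A (r, 1) L (?X (k + 2)) (?X (k + 3))
      = Pset (carrier G) A (1, r) (1, r) z (?X (k + 2))"
    using part_one_ys(2)[of "k + 1"] unfolding idx ys_cyc .
  moreover have "Pset (carrier G) A (r, 1) L (?X (k + 2)) (?X (k + 3))
      = Pset (carrier G) A (1, r) (1, r) (?X k) (?X (k + 2))"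
    using part_one_xs(2)[of "k + 1"] len unfolding idx by simp
  ultimately show "Pset (carrier G) A (1, r) (1, r) (?X (k + 1) \<otimes> \<delta>) (?X (k + 2))
      = Pset (carrier G) A (1, r) (1, r) (?X k) (?X (k + 2))"
    by (simp add: z_def)
  have "Pset (carrier G) A L (r, 1) (?X (k - 1)) z = Pset (carrier G) A (1, r) (1, r) z (?X (k + 2))"
    using part_one_ys(1)[of "k + 1"] unfolding idx ys_cyc .
  moreover have "Pset (carrier G) A L (r, 1) (?X (k - 1)) z
      = (\<lambda>y. y \<otimes> \<delta>) ` Pset (carrier G) A (1, r) (1, r) (?X (k + 1)) (?X (k + 3))"
    using Pset_translate[OF X[of k] X[of "k + 1"] \<delta>G, where i = L and j = "(r, 1)"]
      part_one_xs(1)[of "k + 2"] len k_shift unfolding idx z_def by simp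
  ultimately show "Pset (carrier G) A (1, r) (1, r) (?X (k + 1) \<otimes> \<delta>) (?X (k + 2))
      = (\<lambda>y. y \<otimes> \<delta>) ` Pset (carrier G) A (1, r) (1, r) (?X (k + 1)) (?X (k + 3))"
    by (simp add: z_def)
qed

lemma Pset_mid_shift:
  assumes wdrg: "wdrg (carrier G) A" and r: "1 \<le> r" and walk: "type_walk A r xs"
    and len: "4 \<le> length xs" and two: "two_step_tdist A r (length xs) L"
    and kval_le: "kval (carrier G) A L \<le> kval (carrier G) A (1, r)"
  shows "(\<lambda>y. y \<otimes> inv (cyc xs k)) ` Pset (carrier G) A (1, r) (1, r) (cyc xs k) (cyc xs (k + 2))
    = (\<lambda>y. y \<otimes> inv (cyc xs (k + 1)))
        ` Pset (carrier G) A (1, r) (1, r) (cyc xs (k + 1)) (cyc xs (k + 3))"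
proof -
  let ?X = "cyc xs" and ?P = "Pset (carrier G) A (1, r) (1, r)"
  define \<delta> where "\<delta> = ?X (k - 1) \<otimes> inv (?X k)"
  define z where "z = ?X (k + 1) \<otimes> \<delta>"
  have X: "?X t \<in> carrier G" for t
    using type_walk_arc[OF walk, of t] arc_of_type_iff_tdist[OF wdrg r] by auto
  then have \<delta>G: "\<delta> \<in> carrier G" and zG: "z \<in> carrier G" by (simp_all add: \<delta>_def z_def)
  note parallelogram = Pset_mid_parallelogram[OF assms, of k, folded \<delta>_def z_def]
  have "(\<lambda>y. y \<otimes> inv (?X k)) ` ?P (?X k) (?X (k + 2))
      = (\<lambda>y. ?X (k + 2) \<otimes> inv y) ` ?P (?X k) (?X (k + 2))"
    by (rule Pset_mid_symmetric[OF X X])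
  also have "\<dots> = (\<lambda>y. ?X (k + 2) \<otimes> inv y) ` ?P z (?X (k + 2))"
    by (simp only: parallelogram(1))
  also have "\<dots> = (\<lambda>y. y \<otimes> inv z) ` ?P z (?X (k + 2))"
    by (rule Pset_mid_symmetric[OF zG X, symmetric])
  also have "\<dots> = (\<lambda>y. y \<otimes> \<delta> \<otimes> inv z) ` ?P (?X (k + 1)) (?X (k + 3))"
    by (simp only: parallelogram(2) image_image)
  also have "\<dots> = (\<lambda>y. y \<otimes> inv (?X (k + 1))) ` ?P (?X (k + 1)) (?X (k + 3))"
  proof (rule image_cong[OF refl])
    fix y assume "y \<in> ?P (?X (k + 1)) (?X (k + 3))"
    then have yG: "y \<in> carrier G" by (simp add: Pset_def)
    have "\<delta> \<otimes> inv z = inv (?X (k + 1))"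
      using X \<delta>G by (simp add: z_def m_comm[of "?X (k + 1)" \<delta>] m_inv_mult_cancel)
    then show "y \<otimes> \<delta> \<otimes> inv z = y \<otimes> inv (?X (k + 1))"
      using yG \<delta>G zG by (simp add: m_assoc)
  qed
  finally show ?thesis .
qed

end

theorem lemma2p7:

  fixes V :: "'a set" and A :: "('a \<times> 'a) set" and q :: nat
    and xs :: "'a list" and a b :: nat
  assumes "wdrg V A"
    and "q \<ge> 3"
    and "type_circuit A (q - 1) xs"
    and "\<forall>ys. type_circuit A (q - 1) ys \<longrightarrow> length xs \<le> length ys"
    and "tdist A (cyc xs 0) (cyc xs 2) = (a, b)"
    and "kval V A (1, q - 1) \<ge> kval V A (a, b)"
    and "pnum V A (1, q - 1) (1, q - 1) (2, q - 2) > 0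
         \<or> card {l. pnum V A (1, q - 1) (1, q - 1) l \<noteq> 0} = 1"
  shows "(\<forall>i::int.
            tdist A (cyc xs (i - 1)) (cyc xs (i + 1)) = (a, b) \<and>
            Pset V A (a, b) (q - 1, 1) (cyc xs (i - 2)) (cyc xs (i - 1))
              = Pset V A (1, q - 1) (1, q - 1) (cyc xs (i - 1)) (cyc xs (i + 1)) \<and>
            Pset V A (q - 1, 1) (a, b) (cyc xs (i + 1)) (cyc xs (i + 2))
              = Pset V A (1, q - 1) (1, q - 1) (cyc xs (i - 1)) (cyc xs (i + 1)))
       \<and> (\<forall>(G :: 'a monoid) S.
            q > 3 \<and> comm_group G \<and> carrier G = V \<and> S \<subseteq> V - {\<one>\<^bsub>G\<^esub>} \<and>
            A = {(x, y). x \<in> V \<and> y \<in> V \<and> y \<otimes>\<^bsub>G\<^esub> inv\<^bsub>G\<^esub> x \<in> S}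
            \<longrightarrow> (\<forall>i::int.
                  (\<lambda>y. y \<otimes>\<^bsub>G\<^esub> inv\<^bsub>G\<^esub> (cyc xs (i - 1)))
                    ` Pset V A (1, q - 1) (1, q - 1) (cyc xs (i - 1)) (cyc xs (i + 1))
                  = (\<lambda>y. y \<otimes>\<^bsub>G\<^esub> inv\<^bsub>G\<^esub> (cyc xs i))
                    ` Pset V A (1, q - 1) (1, q - 1) (cyc xs i) (cyc xs (i + 2))))"
proof -
  have wdrg: "wdrg V A" and r: "1 \<le> q - 1" using assms(1,2) by auto
  have walk: "type_walk A (q - 1) xs" using assms(3) by (simp add: type_circuit_iff_type_walk)
  have len: "q \<le> length xs" using type_walk_length_gt[OF walk] assms(2) by simp
  obtain L where two: "two_step_tdist A (q - 1) (length xs) L"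
    using minimal_type_circuit_two_step_tdist[OF wdrg assms(2,3,4,7)] by blast
  have two_step: "tdist A (cyc xs j) (cyc xs (j + 2)) = L" for j
    using two walk unfolding two_step_tdist_def by blast
  have L: "L = (a, b)" using two_step[of 0] assms(5) by simp
  have kval_le: "kval V A L \<le> kval V A (1, q - 1)" using assms(6) L by simp
  have idx: "i - 1 + 1 = i" "i - 1 + 2 = i + 1" "i - 1 + 3 = i + 2" for i :: int by simp_all
  show ?thesis
  proof (intro conjI allI impI)
    fix i :: int
    show "tdist A (cyc xs (i - 1)) (cyc xs (i + 1)) = (a, b)"
      using two_step[of "i - 1"] L unfolding idx by simp
    show "Pset V A (a, b) (q - 1, 1) (cyc xs (i - 2)) (cyc xs (i - 1))
        = Pset V A (1, q - 1) (1, q - 1) (cyc xs (i - 1)) (cyc xs (i + 1))"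
      "Pset V A (q - 1, 1) (a, b) (cyc xs (i + 1)) (cyc xs (i + 2))
        = Pset V A (1, q - 1) (1, q - 1) (cyc xs (i - 1)) (cyc xs (i + 1))"
      using Pset_two_step_eq[OF wdrg r walk _ two kval_le, of i] len assms(2) L by simp_all
  next
    fix G :: "'a monoid" and S i
    assume cayley: "q > 3 \<and> comm_group G \<and> carrier G = V \<and> S \<subseteq> V - {\<one>\<^bsub>G\<^esub>} \<and>
      A = {(x, y). x \<in> V \<and> y \<in> V \<and> y \<otimes>\<^bsub>G\<^esub> inv\<^bsub>G\<^esub> x \<in> S}"
    then interpret comm_group G by blast
    interpret abelian_cayley_digraph G S A by unfold_locales (use cayley in blast)
    show "(\<lambda>y. y \<otimes>\<^bsub>G\<^esub> inv\<^bsub>G\<^esub> (cyc xs (i - 1)))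
          ` Pset V A (1, q - 1) (1, q - 1) (cyc xs (i - 1)) (cyc xs (i + 1))
        = (\<lambda>y. y \<otimes>\<^bsub>G\<^esub> inv\<^bsub>G\<^esub> (cyc xs i))
          ` Pset V A (1, q - 1) (1, q - 1) (cyc xs i) (cyc xs (i + 2))"
      using Pset_mid_shift[OF _ r walk _ two, of "i - 1"] wdrg kval_le len cayley
      unfolding idx by simp
  qed
qed

end
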